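(* For every positive integer $n$, the number of circular permutations of $[n]=\{1,2,\ldots,n\}$ that avoid the pattern $1324$ equals the Fibonacci number $F_{2n-3}$.
   Context: A circular permutation of $[n]$ is an arrangement of $1,2,\ldots,n$ clockwise around a circle, two arrangements being identified if they differ by a rotation. Equivalently, it can be represented uniquely as a linear permutation $\pi_1\pi_2\cdots\pi_n$ of $[n]$ with $\pi_n=n$, whose rotations $\pi_i\pi_{i+1}\cdots\pi_n\pi_1\cdots\pi_{i-1}$ all represent the same circular permutation. The reduced form of a sequence of distinct positive integers is obtained by replacing its smallest entry by $1$, its next smallest by $2$, and so on; a pattern is such a reduced form. An occurrence of a pattern $\tau$ of length $m$ in a circular permutation $\pi$ is a sequence of $m$ letters of $\pi$ read in clockwise order and lying within one revolution (i.e., a subsequence of some rotation of the linear representation) whose reduced form is $\tau$; $\pi$ avoids $\tau$ if it has no occurrence of $\tau$. Fibonacci numbers: $F_1=F_2=1$, $F_{m+1}=F_m+F_{m-1}$, extended to negative index by the same recurrence, so $F_{-1}=1$. *)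

theory Defs
  imports Main "HOL-Library.Sublist"
begin

function fibz :: "int \<Rightarrow> int" where
  "fibz k = (if k = 1 \<or> k = 2 then 1
             else if k > 2 then fibz (k - 1) + fibz (k - 2)
             else fibz (k + 2) - fibz (k + 1))"
  by auto
termination
  by (relation "measure (\<lambda>k. nat \<bar>2 * k - 3\<bar>)") auto

definition reduced_form :: "nat list \<Rightarrow> nat list" where
  "reduced_form xs = map (\<lambda>x. card {y \<in> set xs. y \<le> x}) xs"

text \<open>Circular permutations of [n], represented by the linear permutation with last entry n.\<close>
definition circ_perms :: "nat \<Rightarrow> nat list set" where
  "circ_perms n = {\<pi>. distinct \<pi> \<and> set \<pi> = {1..n} \<and> last \<pi> = n}"

definition circ_contains :: "nat list \<Rightarrow> nat list \<Rightarrow> bool" where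
  "circ_contains \<pi> \<tau> = (\<exists>i ys. subseq ys (rotate i \<pi>) \<and> reduced_form ys = \<tau>)"

definition circ_avoids :: "nat list \<Rightarrow> nat list \<Rightarrow> bool" where
  "circ_avoids \<pi> \<tau> = (\<not> circ_contains \<pi> \<tau>)"

end

theory Submission
  imports Defs
begin

(* Write a circular permutation of [n] as the word \<sigma> n. An occurrence of 1324 through n must
   use n as its 4, leaving a 132 in \<sigma>; an occurrence avoiding n is a linear occurrence in \<sigma> of
   a rotation of 1324, and of these 1324, 2413 and 4132 contain 132 while 3241 remains. So the
   avoiders correspond to the permutations \<sigma> of [n - 1] avoiding 132 and 3241.
   In such a permutation w (m + 1) v of [m + 1], every entry of w exceeds every entry of v, and
   w increases unless v is empty. Hence it either ends with m + 1, or it is j + 1, ..., m + 1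
   followed by an avoider of [j] for some 1 \<le> j \<le> m. The counts therefore satisfy
   a(m + 1) = a(m) + a(1) + ... + a(m) with a(0) = 1, and F(1) + F(3) + ... + F(2m - 1) = F(2m)
   gives a(m) = F(2m - 1). *)

lemma subseq_set_subset: "subseq xs ys \<Longrightarrow> set xs \<subseteq> set ys"
  by (metis subseq_conv_nths set_nths_subset)

lemma subseq_distinct: "subseq xs ys \<Longrightarrow> distinct ys \<Longrightarrow> distinct xs"
  by (metis subseq_conv_nths distinct_nthsI)

lemma sorted_wrt_iff_subseq: "sorted_wrt P xs \<longleftrightarrow> (\<forall>x y. subseq [x, y] xs \<longrightarrow> P x y)"
proof (induction xs)
  case (Cons a xs)
  have "subseq [x, y] (a # xs) \<longleftrightarrow> subseq [x, y] xs \<or> (x = a \<and> y \<in> set xs)" for x y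
    by (cases "x = a") (auto simp: subseq_singleton_left dest: subseq_Cons')
  then show ?case using Cons.IH by auto
qed simp

lemma subseq_snocE:
  assumes "subseq ys (xs @ [x])"
  obtains "subseq ys xs" | zs where "ys = zs @ [x]" "subseq zs xs"
proof -
  from assms obtain zs ws where ys: "ys = zs @ ws" "subseq zs xs" "subseq ws [x]"
    by (rule subseq_appendE)
  have "ws = [] \<or> ws = [x]"
    using ys(3) list_emb_length[OF ys(3)] by (cases ws) (auto simp: subseq_singleton_left split: if_splits)
  then show thesis using ys that by auto
qed

lemma subseq_middleE:
  assumes "subseq p (w @ m # v)"
  obtains "subseq p (w @ v)" | p1 p2 where "p = p1 @ m # p2" "subseq p1 w" "subseq p2 v"
proof -
  from assms obtain q1 q2 where q: "p = q1 @ q2" "subseq q1 w" "subseq q2 (m # v)"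
    by (rule subseq_appendE)
  show thesis
  proof (cases "q2 \<noteq> [] \<and> hd q2 = m")
    case True
    then obtain p2 where "q2 = m # p2" by (cases q2) auto
    then show thesis using q that(2) by auto
  next
    case False
    then have "subseq q2 v" using q(3) by (cases q2) auto
    then show thesis using q that(1) by (simp add: list_emb_append_mono)
  qed
qed

lemma subseq_rotateE:
  assumes "subseq ys (rotate i xs)"
  obtains zs k where "subseq zs xs" "ys = rotate k zs"
proof -
  let ?j = "i mod length xs"
  from assms obtain q1 q2 where q: "ys = q1 @ q2" "subseq q1 (drop ?j xs)" "subseq q2 (take ?j xs)"
    by (auto simp: rotate_drop_take elim: subseq_appendE)
  then have "subseq (q2 @ q1) xs"
    by (metis append_take_drop_id list_emb_append_mono)
  moreover have "ys = rotate (length q2) (q2 @ q1)"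
    using q(1) by (simp add: rotate_append)
  ultimately show thesis by (rule that)
qed

lemma subseq_rotate_rotate:
  assumes "subseq ys xs"
  obtains j where "subseq (rotate i ys) (rotate j xs)"
proof -
  let ?k = "i mod length ys"
  obtain us vs where uv: "xs = us @ vs" "subseq (take ?k ys) us" "subseq (drop ?k ys) vs"
    using assms list_emb_appendD[of _ "take ?k ys" "drop ?k ys"] by (metis append_take_drop_id)
  then have "subseq (rotate i ys) (vs @ us)"
    by (simp add: rotate_drop_take list_emb_append_mono)
  then have "subseq (rotate i ys) (rotate (length us) xs)"
    using uv(1) by (simp add: rotate_append)
  then show thesis by (rule that)
qed

lemma rotate_eq_4E:
  assumes "rotate k zs = [a, b, c, d]"
  obtains "zs = [a, b, c, d]" | "zs = [d, a, b, c]" | "zs = [c, d, a, b]" | "zs = [b, c, d, a]"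
proof -
  have "length zs = 4" using arg_cong[OF assms, of length] by simp
  then obtain p q r s where zs: "zs = [p, q, r, s]"
    by (auto simp: length_Suc_conv numeral_eq_Suc)
  define m where "m = k mod 4"
  have "m < 4" unfolding m_def by simp
  then have "rotate m [p, q, r, s] \<in> {[p, q, r, s], [q, r, s, p], [r, s, p, q], [s, p, q, r]}"
    by (auto simp: less_Suc_eq numeral_eq_Suc rotate_def)
  moreover have "rotate m [p, q, r, s] = [a, b, c, d]"
    using assms rotate_conv_mod[of k zs] zs unfolding m_def by simp
  ultimately show thesis using that unfolding zs by auto
qed

lemma rank_less_imp_less:
  fixes S :: "'a::linorder set"
  assumes "finite S" "card {y \<in> S. y \<le> x} < card {y \<in> S. y \<le> x'}"
  shows "x < x'"
proof (rule ccontr)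
  assume "\<not> x < x'"
  then have "{y \<in> S. y \<le> x'} \<subseteq> {y \<in> S. y \<le> x}" by auto
  then have "card {y \<in> S. y \<le> x'} \<le> card {y \<in> S. y \<le> x}" using assms(1) by (simp add: card_mono)
  then show False using assms(2) by simp
qed

lemma reduced_form_eq_1324_iff:
  "reduced_form ys = [1, 3, 2, 4] \<longleftrightarrow> (\<exists>a b c d. ys = [a, b, c, d] \<and> a < c \<and> c < b \<and> b < d)"
proof
  assume red: "reduced_form ys = [1, 3, 2, 4]"
  then have "length (reduced_form ys) = 4" by simp
  then have "length ys = 4" by (simp add: reduced_form_def)
  then obtain a b c d where ys: "ys = [a, b, c, d]"
    by (auto simp: length_Suc_conv numeral_eq_Suc)
  let ?rank = "\<lambda>x. card {y \<in> set ys. y \<le> x}"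
  have rank: "?rank a = 1" "?rank b = 3" "?rank c = 2" "?rank d = 4"
    using red unfolding ys reduced_form_def by simp_all
  have "a < c" "c < b" "b < d"
    by (rule rank_less_imp_less[of "set ys"]; simp add: rank)+
  then show "\<exists>a b c d. ys = [a, b, c, d] \<and> a < c \<and> c < b \<and> b < d"
    using ys by blast
next
  assume "\<exists>a b c d. ys = [a, b, c, d] \<and> a < c \<and> c < b \<and> b < d"
  then obtain a b c d where ys: "ys = [a, b, c, d]" and ord: "a < c" "c < b" "b < d" by blast
  let ?S = "set [a, b, c, d]"
  have "{y \<in> ?S. y \<le> a} = {a}" "{y \<in> ?S. y \<le> b} = {a, b, c}"
    "{y \<in> ?S. y \<le> c} = {a, c}" "{y \<in> ?S. y \<le> d} = {a, b, c, d}"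
    using ord by auto
  then show "reduced_form ys = [1, 3, 2, 4]"
    unfolding ys reduced_form_def using ord by simp
qed

definition avoids_132_3241 :: "nat list \<Rightarrow> bool" where
  "avoids_132_3241 s \<longleftrightarrow>
     \<not> (\<exists>a b c. subseq [a, b, c] s \<and> a < c \<and> c < b) \<and>
     \<not> (\<exists>a b c d. subseq [a, b, c, d] s \<and> d < b \<and> b < a \<and> a < c)"

lemma avoids_132_3241_subseq: "avoids_132_3241 s \<Longrightarrow> subseq t s \<Longrightarrow> avoids_132_3241 t"
  unfolding avoids_132_3241_def by (meson subseq_order.trans)

lemma avoids_132_3241_insert_max_iff:
  assumes dist: "distinct (w @ M # v)" and bound: "\<forall>x\<in>set (w @ v). x < M"
  shows "avoids_132_3241 (w @ M # v) \<longleftrightarrow>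
    avoids_132_3241 (w @ v) \<and> (\<forall>x\<in>set w. \<forall>y\<in>set v. y < x) \<and> (v = [] \<or> sorted_wrt (<) w)"
    (is "?lhs \<longleftrightarrow> ?rest \<and> ?above \<and> ?sorted")
proof
  assume avoid: ?lhs
  have ?rest
    using avoid by (rule avoids_132_3241_subseq) (simp add: subseq_append' list_emb_Cons)
  moreover have above: ?above
  proof (intro ballI)
    fix x y assume xy: "x \<in> set w" "y \<in> set v"
    have "subseq [x, M, y] (w @ M # v)"
      using xy list_emb_append_mono[of "(=)" "[x]" w "[M, y]" "M # v"]
      by (simp add: subseq_singleton_left)
    moreover have "x \<noteq> y" "y < M" using dist bound xy by auto
    ultimately show "y < x" using avoid unfolding avoids_132_3241_def by (meson linorder_neqE_nat)
  qed
  moreover have "sorted_wrt (<) w" if z: "z \<in> set v" for z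
    unfolding sorted_wrt_iff_subseq
  proof (intro allI impI)
    fix x y assume xy: "subseq [x, y] w"
    have "subseq [x, y, M, z] (w @ M # v)"
      using xy z list_emb_append_mono[of "(=)" "[x, y]" w "[M, z]" "M # v"]
      by (simp add: subseq_singleton_left)
    moreover have "x \<noteq> y" using subseq_distinct[OF xy] dist by auto
    moreover have "z < y" "x < M" using above bound subseq_set_subset[OF xy] z by auto
    ultimately show "x < y" using avoid unfolding avoids_132_3241_def by (meson linorder_neqE_nat)
  qed
  then have ?sorted by (metis list.set_intros(1) neq_Nil_conv)
  ultimately show "?rest \<and> ?above \<and> ?sorted" by blast
next
  assume "?rest \<and> ?above \<and> ?sorted"
  then have rest: ?rest and above: ?above and sorted: ?sorted by auto
  have below_M: "x < M" if "x \<in> set w \<or> x \<in> set v" for x using bound that by auto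
  show ?lhs
    unfolding avoids_132_3241_def
  proof (intro conjI notI; elim exE conjE)
    fix a b c assume occ: "subseq [a, b, c] (w @ M # v)" and ord: "a < c" "c < b"
    from occ show False
    proof (cases rule: subseq_middleE)
      case 1
      then show False using rest ord unfolding avoids_132_3241_def by blast
    next
      case (2 p1 p2)
      have sets: "set p1 \<subseteq> set w" "set p2 \<subseteq> set v" using 2 subseq_set_subset by auto
      from 2(1) consider "a = M" "p2 = [b, c]" | "p1 = [a]" "b = M" "p2 = [c]" | "c = M" "p1 = [a, b]"
        by (auto simp: Cons_eq_append_conv)
      then show False using sets above below_M ord by cases force+
    qed
  next
    fix a b c d assume occ: "subseq [a, b, c, d] (w @ M # v)" and ord: "d < b" "b < a" "a < c"
    from occ show False
    proof (cases rule: subseq_middleE)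
      case 1
      then show False using rest ord unfolding avoids_132_3241_def by blast
    next
      case (2 p1 p2)
      have sets: "set p1 \<subseteq> set w" "set p2 \<subseteq> set v" using 2 subseq_set_subset by auto
      from 2(1) consider "a = M" "p2 = [b, c, d]" | "p1 = [a]" "b = M" "p2 = [c, d]"
        | "p1 = [a, b]" "c = M" "p2 = [d]" | "d = M" "p1 = [a, b, c]"
        by (auto simp: Cons_eq_append_conv)
      then show False
      proof cases
        case 3
        then have "sorted_wrt (<) w" using sorted 2(3) by auto
        then have "a < b" using 2(2) 3 unfolding sorted_wrt_iff_subseq by auto
        with ord show False by simp
      qed (use sets above below_M ord in force)+
    qed
  qed
qed

lemma circ_contains_1324_snoc_max_iff:
  assumes bound: "\<forall>x\<in>set \<sigma>. x < M"
  shows "circ_contains (\<sigma> @ [M]) [1, 3, 2, 4] \<longleftrightarrow> \<not> avoids_132_3241 \<sigma>"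
proof
  assume "circ_contains (\<sigma> @ [M]) [1, 3, 2, 4]"
  then obtain i ys where "subseq ys (rotate i (\<sigma> @ [M]))" "reduced_form ys = [1, 3, 2, 4]"
    unfolding circ_contains_def by blast
  then obtain a b c d zs k where ord: "a < c" "c < b" "b < d"
    and zs: "subseq zs (\<sigma> @ [M])" "rotate k zs = [a, b, c, d]"
    unfolding reduced_form_eq_1324_iff by (metis subseq_rotateE)
  show "\<not> avoids_132_3241 \<sigma>"
  proof (cases rule: subseq_snocE[OF zs(1)])
    case 1
    have "subseq [a, b, c] [a, b, c, d]" "subseq [a, b, c] [d, a, b, c]" "subseq [c, d, b] [c, d, a, b]"
      by simp_all
    then have "\<not> avoids_132_3241 zs"
      using ord unfolding avoids_132_3241_def by (cases rule: rotate_eq_4E[OF zs(2)]) blast+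
    then show ?thesis using 1 avoids_132_3241_subseq by blast
  next
    case (2 zs')
    have "\<forall>x\<in>set zs'. x < M" using 2 bound subseq_set_subset by blast
    then have "zs' = [a, b, c]"
      using ord 2(1) by (cases rule: rotate_eq_4E[OF zs(2)]) auto
    then show ?thesis using 2(2) ord unfolding avoids_132_3241_def by blast
  qed
next
  assume "\<not> avoids_132_3241 \<sigma>"
  then consider (occ132) a b c where "subseq [a, b, c] \<sigma>" "a < c" "c < b"
    | (occ3241) a b c d where "subseq [a, b, c, d] \<sigma>" "d < b" "b < a" "a < c"
    unfolding avoids_132_3241_def by blast
  then show "circ_contains (\<sigma> @ [M]) [1, 3, 2, 4]"
  proof cases
    case occ132
    then have "b < M" using bound subseq_set_subset by fastforce
    have "subseq [a, b, c, M] (rotate 0 (\<sigma> @ [M]))"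
      using list_emb_append_mono[OF occ132(1), of "[M]" "[M]"] by simp
    moreover have "reduced_form [a, b, c, M] = [1, 3, 2, 4]"
      using reduced_form_eq_1324_iff occ132 \<open>b < M\<close> by blast
    ultimately show ?thesis unfolding circ_contains_def by blast
  next
    case occ3241
    then have "subseq [a, b, c, d] (\<sigma> @ [M])" by (simp add: subseq_rev_drop_many)
    then obtain j where "subseq (rotate 3 [a, b, c, d]) (rotate j (\<sigma> @ [M]))"
      by (rule subseq_rotate_rotate)
    moreover have "reduced_form (rotate 3 [a, b, c, d]) = [1, 3, 2, 4]"
      using reduced_form_eq_1324_iff occ3241 by (simp add: rotate_def numeral_eq_Suc)
    ultimately show ?thesis unfolding circ_contains_def by blast
  qed
qed

definition av_perms :: "nat \<Rightarrow> nat list set" where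
  "av_perms m = {s. distinct s \<and> set s = {1..m} \<and> avoids_132_3241 s}"

lemma finite_av_perms: "finite (av_perms m)"
proof (rule finite_subset)
  show "av_perms m \<subseteq> {s. set s \<subseteq> {1..m} \<and> length s = m}"
    unfolding av_perms_def using distinct_card by fastforce
qed (simp add: finite_lists_length_eq)

lemma av_perms_zero: "av_perms 0 = {[]}"
  by (auto simp: av_perms_def avoids_132_3241_def)

lemma distinct_set_insert_max_iff:
  "distinct (w @ Suc m # v) \<and> set (w @ Suc m # v) = {1..Suc m} \<longleftrightarrow>
    distinct (w @ v) \<and> set (w @ v) = {1..m}"
proof -
  have "distinct (w @ Suc m # v) \<longleftrightarrow> distinct (w @ v) \<and> Suc m \<notin> set (w @ v)" by auto
  moreover have "set (w @ Suc m # v) = insert (Suc m) (set (w @ v))" by auto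
  moreover have "{1..Suc m} = insert (Suc m) {1..m}" "Suc m \<notin> {1..m}" by auto
  ultimately show ?thesis by (metis insert_ident)
qed

lemma insert_max_in_av_perms_iff:
  "w @ Suc m # v \<in> av_perms (Suc m) \<longleftrightarrow>
    w @ v \<in> av_perms m \<and> (\<forall>x\<in>set w. \<forall>y\<in>set v. y < x) \<and> (v = [] \<or> sorted_wrt (<) w)"
proof (cases "distinct (w @ v) \<and> set (w @ v) = {1..m}")
  case True
  then have "distinct (w @ Suc m # v)" "\<forall>x\<in>set (w @ v). x < Suc m"
    using distinct_set_insert_max_iff by auto
  then show ?thesis
    using True distinct_set_insert_max_iff avoids_132_3241_insert_max_iff
    unfolding av_perms_def by auto
next
  case False
  then show ?thesis using distinct_set_insert_max_iff unfolding av_perms_def by blast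
qed

lemma upt_append_in_av_perms:
  assumes v: "v \<in> av_perms j" and "j \<le> m"
  shows "[Suc j..<Suc m] @ v \<in> av_perms m"
  using \<open>j \<le> m\<close>
proof (induction m rule: dec_induct)
  case base
  then show ?case using v by simp
next
  case (step n)
  have "[Suc j..<Suc (Suc n)] @ v = [Suc j..<Suc n] @ Suc n # v"
    using step.hyps by simp
  moreover have "\<forall>x\<in>set [Suc j..<Suc n]. \<forall>y\<in>set v. y < x"
    using v unfolding av_perms_def by auto
  ultimately show ?case
    using step.IH insert_max_in_av_perms_iff[of "[Suc j..<Suc n]" n v] by (simp del: upt_Suc)
qed

lemma interval_split_above:
  fixes A B :: "nat set"
  assumes AB: "A \<union> B = {1..m}" and above: "\<forall>x\<in>A. \<forall>y\<in>B. y < x" and "B \<noteq> {}"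
  obtains j where "j \<in> {1..m}" "B = {1..j}" "A = {Suc j..m}"
proof
  have "finite B" using AB by (metis finite_Un finite_atLeastAtMost)
  then have j: "Max B \<in> B" "\<forall>y\<in>B. y \<le> Max B" using \<open>B \<noteq> {}\<close> by auto
  then show jm: "Max B \<in> {1..m}" using AB by blast
  have "x \<in> A \<longleftrightarrow> x \<in> {1..m} \<and> Max B < x" for x
    using AB above j by (metis Un_iff UnI1 not_le)
  moreover have "x \<in> B \<longleftrightarrow> x \<in> {1..m} \<and> x \<le> Max B" for x
    using AB above j by (metis Un_iff UnI2 not_le)
  ultimately show "B = {1..Max B}" "A = {Suc (Max B)..m}"
    using jm by auto
qed

lemma av_perms_Suc:
  "av_perms (Suc m) = (\<lambda>t. t @ [Suc m]) ` av_perms m \<union>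
    (\<Union>j\<in>{1..m}. (\<lambda>v. [Suc j..<Suc (Suc m)] @ v) ` av_perms j)" (is "_ = ?R")
proof (intro equalityI subsetI)
  fix s assume s: "s \<in> av_perms (Suc m)"
  then have "Suc m \<in> set s" unfolding av_perms_def by auto
  then obtain w v where s_eq: "s = w @ Suc m # v" by (meson split_list)
  with s have wv: "w @ v \<in> av_perms m" and above: "\<forall>x\<in>set w. \<forall>y\<in>set v. y < x"
    and sorted: "v = [] \<or> sorted_wrt (<) w"
    using insert_max_in_av_perms_iff by auto
  show "s \<in> ?R"
  proof (cases "v = []")
    case True
    then show ?thesis using s_eq wv by auto
  next
    case False
    have "set w \<union> set v = {1..m}" using wv unfolding av_perms_def by auto
    then obtain j where j: "j \<in> {1..m}" "set v = {1..j}" "set w = {Suc j..m}"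
      using above False by (elim interval_split_above) auto
    have "w = [Suc j..<Suc m]"
      using sorted False j(3) sorted_wrt_upt
      by (intro strict_sorted_equal) (simp_all del: upt_Suc add: atLeastLessThanSuc_atLeastAtMost)
    moreover have "v \<in> av_perms j"
      using wv j(2) avoids_132_3241_subseq[of "w @ v" v]
      unfolding av_perms_def by (simp add: subseq_drop_many)
    ultimately have "s = [Suc j..<Suc (Suc m)] @ v" using s_eq j(1) by simp
    then show ?thesis using j(1) \<open>v \<in> av_perms j\<close> by blast
  qed
next
  fix s assume "s \<in> ?R"
  then show "s \<in> av_perms (Suc m)"
  proof (elim UnE imageE UN_E)
    fix t assume "t \<in> av_perms m" "s = t @ [Suc m]"
    then show ?thesis using insert_max_in_av_perms_iff[of t m "[]"] by simp
  next
    fix j v assume "j \<in> {1..m}" "v \<in> av_perms j" "s = [Suc j..<Suc (Suc m)] @ v"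
    then show ?thesis using upt_append_in_av_perms[of v j "Suc m"] by simp
  qed
qed

lemma card_av_perms_Suc:
  "card (av_perms (Suc m)) = card (av_perms m) + (\<Sum>j = 1..m. card (av_perms j))"
proof -
  let ?prefix = "\<lambda>j v. [Suc j..<Suc (Suc m)] @ v"
  have hd_prefix: "hd (?prefix j v) = Suc j" if "j \<le> m" for j v
    using that by (simp add: upt_conv_Cons del: upt_Suc)
  have snoc_neq_prefix: "t @ [Suc m] \<noteq> ?prefix j v" if "j \<in> {1..m}" "v \<in> av_perms j" for j v t
  proof -
    have "v \<noteq> []" "set v = {1..j}" using that unfolding av_perms_def by auto
    then have "last (?prefix j v) \<le> m" using that(1) last_in_set[of v] by auto
    then show ?thesis by (metis last_snoc not_less_eq_eq order_refl)
  qed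
  have "card (\<Union>j\<in>{1..m}. ?prefix j ` av_perms j) = (\<Sum>j = 1..m. card (?prefix j ` av_perms j))"
    by (rule card_UN_disjoint)
      (auto simp: finite_av_perms hd_prefix simp del: upt_Suc dest!: arg_cong[where f = hd])
  also have "\<dots> = (\<Sum>j = 1..m. card (av_perms j))"
    by (simp add: card_image inj_on_def del: upt_Suc)
  moreover have "card ((\<lambda>t. t @ [Suc m]) ` av_perms m) = card (av_perms m)"
    by (simp add: card_image inj_on_def)
  moreover have "(\<lambda>t. t @ [Suc m]) ` av_perms m \<inter> (\<Union>j\<in>{1..m}. ?prefix j ` av_perms j) = {}"
    using snoc_neq_prefix by (auto simp del: upt_Suc)
  ultimately show ?thesis
    unfolding av_perms_Suc by (simp add: card_Un_disjoint finite_av_perms)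
qed

(* The defining equation of fibz is unguarded and would make the simplifier loop. *)
declare fibz.simps [simp del]

lemma fibz_add_two: "fibz (k + 2) = fibz (k + 1) + fibz k"
proof (cases "k \<ge> 1")
  case True
  then show ?thesis by (subst fibz.simps) (simp add: add.commute)
next
  case False
  \<comment> \<open>for k < 1 this is the defining equation of fibz k itself\<close>
  then show ?thesis by (subst (2) fibz.simps) simp
qed

lemma fibz_zero: "fibz 0 = 0" and fibz_neg_one: "fibz (-1) = 1"
proof -
  have one: "fibz 1 = 1" and "fibz 2 = 1" by (subst fibz.simps; simp)+
  then show zero: "fibz 0 = 0" using fibz_add_two[of 0] by simp
  show "fibz (-1) = 1" using one zero fibz_add_two[of "-1"] by simp
qed

lemma sum_fibz_odd: "(\<Sum>j = 1..m. fibz (2 * int j - 1)) = fibz (2 * int m)"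
proof (induction m)
  case 0
  show ?case by (simp add: fibz_zero)
next
  case (Suc m)
  then show ?case using fibz_add_two[of "2 * int m"] by (simp add: algebra_simps)
qed

lemma card_av_perms: "int (card (av_perms m)) = fibz (2 * int m - 1)"
proof (induction m rule: less_induct)
  case (less m)
  show ?case
  proof (cases m)
    case 0
    then show ?thesis by (simp add: av_perms_zero fibz_neg_one)
  next
    case (Suc k)
    have "int (card (av_perms m)) = fibz (2 * int k - 1) + (\<Sum>j = 1..k. fibz (2 * int j - 1))"
      using less.IH Suc by (simp add: card_av_perms_Suc)
    also have "\<dots> = fibz (2 * int k - 1) + fibz (2 * int k)"
      using sum_fibz_odd[of k] by simp
    also have "\<dots> = fibz (2 * int m - 1)"
      using fibz_add_two[of "2 * int k - 1"] Suc by (simp add: algebra_simps)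
    finally show ?thesis .
  qed
qed

lemma circ_perms_avoiding_1324_eq:
  "{\<pi> \<in> circ_perms (Suc k). circ_avoids \<pi> [1, 3, 2, 4]} = (\<lambda>\<sigma>. \<sigma> @ [Suc k]) ` av_perms k"
proof (intro equalityI subsetI)
  fix \<pi> assume "\<pi> \<in> {\<pi> \<in> circ_perms (Suc k). circ_avoids \<pi> [1, 3, 2, 4]}"
  then have \<pi>: "distinct \<pi>" "set \<pi> = {1..Suc k}" "last \<pi> = Suc k" "circ_avoids \<pi> [1, 3, 2, 4]"
    unfolding circ_perms_def by auto
  then have "\<pi> \<noteq> []" by auto
  then obtain \<sigma> where \<sigma>: "\<pi> = \<sigma> @ [Suc k]" using \<pi>(3) by (metis append_butlast_last_id)
  then have perm: "distinct \<sigma> \<and> set \<sigma> = {1..k}"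
    using \<pi> distinct_set_insert_max_iff[of \<sigma> k "[]"] by simp
  then have "avoids_132_3241 \<sigma>"
    using \<pi>(4) \<sigma> circ_contains_1324_snoc_max_iff[of \<sigma> "Suc k"] unfolding circ_avoids_def by auto
  then show "\<pi> \<in> (\<lambda>\<sigma>. \<sigma> @ [Suc k]) ` av_perms k"
    using \<sigma> perm unfolding av_perms_def by blast
next
  fix \<pi> assume "\<pi> \<in> (\<lambda>\<sigma>. \<sigma> @ [Suc k]) ` av_perms k"
  then obtain \<sigma> where \<sigma>: "\<sigma> \<in> av_perms k" "\<pi> = \<sigma> @ [Suc k]" by blast
  then show "\<pi> \<in> {\<pi> \<in> circ_perms (Suc k). circ_avoids \<pi> [1, 3, 2, 4]}"
    using distinct_set_insert_max_iff[of \<sigma> k "[]"] circ_contains_1324_snoc_max_iff[of \<sigma> "Suc k"]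
    unfolding circ_perms_def av_perms_def circ_avoids_def by auto
qed

theorem theorem1:
  fixes n :: nat
  assumes "n \<ge> 1"
  shows "int (card {\<pi> \<in> circ_perms n. circ_avoids \<pi> [1, 3, 2, 4]}) = fibz (2 * int n - 3)"
proof -
  obtain k where n: "n = Suc k" using assms by (cases n) auto
  have "card {\<pi> \<in> circ_perms n. circ_avoids \<pi> [1, 3, 2, 4]} = card (av_perms k)"
    unfolding n circ_perms_avoiding_1324_eq by (simp add: card_image inj_on_def)
  then show ?thesis using card_av_perms[of k] n by simp
qed

end
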